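(* For $\mu\in\mathcal{B}$ define $T_\mu: B_{X_\mu^*}\to[-1,1]^V$ by $T_\mu(f)(0_V)=0$ and $T_\mu(f)(u)=f(u)/\mu(u)$ for $u\in V\setminus\{0_V\}$, and let $K_\mu=T_\mu(B_{X_\mu^*})$. Then the set $K=\{(\mu,g)\in\mathcal{B}\times[-1,1]^V: g\in K_\mu\}$ is closed in $\mathcal{B}\times[-1,1]^V$ (product topology, $[-1,1]^V$ with the product topology).
   Context: $V$ is the set of finitely supported rational sequences; $\mathcal{P}\subset\mathbb{R}^V$ the seminorms on $V$ with pointwise convergence topology; for $\mu\in\mathcal{P}$, $\bar\mu$ is its seminorm extension to $c_{00}$ and $X_\mu$ the completion of $c_{00}/\{\bar\mu=0\}$; $\mathcal{B}$ is the set of $\mu\in\mathcal{P}$ with $X_\mu$ infinite-dimensional and $\bar\mu$ a norm on $c_{00}$, with the subspace topology. For $\mu\in\mathcal{B}$, $V\subset c_{00}\subset X_\mu$ and $\mu(u)>0$ for $u\ne0_V$. *)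

theory Defs
  imports "HOL-Analysis.Analysis"
begin

definition VV :: "(nat \<Rightarrow> rat) set" where
  "VV = {u. finite {n. u n \<noteq> 0}}"

definition c00 :: "(nat \<Rightarrow> real) set" where
  "c00 = {x. finite {n. x n \<noteq> 0}}"

definition emb :: "(nat \<Rightarrow> rat) \<Rightarrow> (nat \<Rightarrow> real)" where
  "emb u = (\<lambda>n. of_rat (u n))"

definition RV_top :: "((nat \<Rightarrow> rat) \<Rightarrow> real) topology" where
  "RV_top = product_topology (\<lambda>_. euclideanreal) VV"

definition cube_top :: "((nat \<Rightarrow> rat) \<Rightarrow> real) topology" where
  "cube_top = product_topology (\<lambda>_. top_of_set {-1..1}) VV"

definition is_seminorm_V :: "((nat \<Rightarrow> rat) \<Rightarrow> real) \<Rightarrow> bool" where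
  "is_seminorm_V \<mu> \<longleftrightarrow>
     (\<forall>u\<in>VV. \<forall>v\<in>VV. \<mu> (\<lambda>n. u n + v n) \<le> \<mu> u + \<mu> v) \<and>
     (\<forall>u\<in>VV. \<forall>q::rat. \<mu> (\<lambda>n. q * u n) = \<bar>of_rat q\<bar> * \<mu> u)"

definition PP :: "((nat \<Rightarrow> rat) \<Rightarrow> real) set" where
  "PP = {\<mu> \<in> topspace RV_top. is_seminorm_V \<mu>}"

definition is_seminorm_c00 :: "((nat \<Rightarrow> real) \<Rightarrow> real) \<Rightarrow> bool" where
  "is_seminorm_c00 \<nu> \<longleftrightarrow>
     (\<forall>x\<in>c00. \<forall>y\<in>c00. \<nu> (\<lambda>n. x n + y n) \<le> \<nu> x + \<nu> y) \<and>
     (\<forall>x\<in>c00. \<forall>a::real. \<nu> (\<lambda>n. a * x n) = \<bar>a\<bar> * \<nu> x) \<and>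
     (\<forall>x. x \<notin> c00 \<longrightarrow> \<nu> x = 0)"

text \<open>The seminorm extension of mu to c00 (unique, since every seminorm on a
  finite-dimensional real space is continuous and V is dense there).\<close>
definition mu_bar :: "((nat \<Rightarrow> rat) \<Rightarrow> real) \<Rightarrow> ((nat \<Rightarrow> real) \<Rightarrow> real)" where
  "mu_bar \<mu> = (THE \<nu>. is_seminorm_c00 \<nu> \<and> (\<forall>u\<in>VV. \<nu> (emb u) = \<mu> u))"

text \<open>X_mu infinite-dimensional, i.e. c00 / ker(mu_bar) (dense in X_mu) has
  arbitrarily large linearly independent families.\<close>
definition X_inf_dim :: "((nat \<Rightarrow> rat) \<Rightarrow> real) \<Rightarrow> bool" where
  "X_inf_dim \<mu> \<longleftrightarrow>
     (\<forall>m::nat. \<exists>x :: nat \<Rightarrow> (nat \<Rightarrow> real). (\<forall>i<m. x i \<in> c00) \<and>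
        (\<forall>c :: nat \<Rightarrow> real. mu_bar \<mu> (\<lambda>k. \<Sum>i<m. c i * x i k) = 0 \<longrightarrow> (\<forall>i<m. c i = 0)))"

definition BB :: "((nat \<Rightarrow> rat) \<Rightarrow> real) set" where
  "BB = {\<mu> \<in> PP. X_inf_dim \<mu> \<and> (\<forall>x\<in>c00. mu_bar \<mu> x = 0 \<longrightarrow> x = (\<lambda>_. 0))}"

text \<open>Unit ball of X_mu^*, identified with the real-linear functionals on c00
  bounded by mu_bar (each extends uniquely to X_mu, c00 being dense).\<close>
definition dual_ball :: "((nat \<Rightarrow> rat) \<Rightarrow> real) \<Rightarrow> ((nat \<Rightarrow> real) \<Rightarrow> real) set" where
  "dual_ball \<mu> = {f. (\<forall>x\<in>c00. \<forall>y\<in>c00. \<forall>a b::real.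
                        f (\<lambda>n. a * x n + b * y n) = a * f x + b * f y) \<and>
                     (\<forall>x\<in>c00. \<bar>f x\<bar> \<le> mu_bar \<mu> x)}"

definition T_op :: "((nat \<Rightarrow> rat) \<Rightarrow> real) \<Rightarrow> ((nat \<Rightarrow> real) \<Rightarrow> real) \<Rightarrow> ((nat \<Rightarrow> rat) \<Rightarrow> real)" where
  "T_op \<mu> f = (\<lambda>u\<in>VV. if u = (\<lambda>_. 0) then 0 else f (emb u) / \<mu> u)"

definition K_mu :: "((nat \<Rightarrow> rat) \<Rightarrow> real) \<Rightarrow> ((nat \<Rightarrow> rat) \<Rightarrow> real) set" where
  "K_mu \<mu> = T_op \<mu> ` dual_ball \<mu>"

definition KK :: "(((nat \<Rightarrow> rat) \<Rightarrow> real) \<times> ((nat \<Rightarrow> rat) \<Rightarrow> real)) set" where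
  "KK = {(\<mu>, g). \<mu> \<in> BB \<and> g \<in> topspace cube_top \<and> g \<in> K_mu \<mu>}"

end

theory Submission
  imports Defs
begin

(* For \<mu> \<in> B, a point g of the cube lies in K_\<mu> exactly when g(0) = 0 and u \<mapsto> g(u) \<mu>(u) is
   Q-linear on V. Such a map extends R-linearly to c00 through its values on the unit vectors;
   the extension is bounded by mu_bar on V because |g| \<le> 1, and hence on all of c00, since V is
   dense for the weighted l1-norm \<Sum> |x_n| \<mu>(e_n), which dominates every seminorm extending \<mu>.
   Each of these conditions involves finitely many coordinates of (\<mu>, g) and is closed, so K is an
   intersection of closed sets. As mu_bar is a definite description, it also has to be shown that
   the extension exists; it is the infimal convolution of \<mu> with the weighted l1-norm. *)

lemma finite_support_lincomb:
  fixes u v :: "'i \<Rightarrow> 'a::semiring_0"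
  assumes "finite {n. u n \<noteq> 0}" "finite {n. v n \<noteq> 0}"
  shows "finite {n. a * u n + b * v n \<noteq> 0}"
  by (rule rev_finite_subset[of "{n. u n \<noteq> 0} \<union> {n. v n \<noteq> 0}"]) (use assms in auto)

lemma VV_lincomb: "u \<in> VV \<Longrightarrow> v \<in> VV \<Longrightarrow> (\<lambda>n. a * u n + b * v n) \<in> VV"
  unfolding VV_def using finite_support_lincomb by blast

lemma c00_lincomb: "x \<in> c00 \<Longrightarrow> y \<in> c00 \<Longrightarrow> (\<lambda>n. a * x n + b * y n) \<in> c00"
  unfolding c00_def using finite_support_lincomb by blast

lemma VV_scale: "u \<in> VV \<Longrightarrow> (\<lambda>n. a * u n) \<in> VV"
  using VV_lincomb[of u u a 0] by simp

lemma c00_scale: "x \<in> c00 \<Longrightarrow> (\<lambda>n. a * x n) \<in> c00"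
  using c00_lincomb[of x x a 0] by simp

lemma c00_diff: "x \<in> c00 \<Longrightarrow> y \<in> c00 \<Longrightarrow> (\<lambda>n. x n - y n) \<in> c00"
  using c00_lincomb[of x y 1 "-1"] by simp

lemma VV_zero: "(\<lambda>_. 0) \<in> VV"
  unfolding VV_def by simp

lemma c00_zero: "(\<lambda>_. 0) \<in> c00"
  unfolding c00_def by simp

lemma support_emb: "{n. emb u n \<noteq> 0} = {n. u n \<noteq> 0}"
  unfolding emb_def by auto

lemma emb_c00: "u \<in> VV \<Longrightarrow> emb u \<in> c00"
  unfolding c00_def VV_def by (simp add: support_emb)

lemma emb_lincomb: "emb (\<lambda>n. a * u n + b * v n) = (\<lambda>n. of_rat a * emb u n + of_rat b * emb v n)"
  unfolding emb_def by (simp add: of_rat_add of_rat_mult)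

lemma emb_eq_zero_iff: "emb u = (\<lambda>_. 0) \<longleftrightarrow> u = (\<lambda>_. 0)"
  unfolding emb_def by (simp add: fun_eq_iff)

definition unit_seq :: "nat \<Rightarrow> nat \<Rightarrow> rat" where
  "unit_seq i = (\<lambda>n. if n = i then 1 else 0)"

lemma unit_seq_VV: "unit_seq i \<in> VV"
  unfolding VV_def unit_seq_def mem_Collect_eq by (rule rev_finite_subset[of "{i}"]) auto

lemma emb_unit_seq: "emb (unit_seq i) = (\<lambda>n. if n = i then 1 else 0)"
  unfolding emb_def unit_seq_def by auto

section \<open>Seminorms and the weighted l1-norm\<close>

lemma PP_triangle: "\<mu> \<in> PP \<Longrightarrow> u \<in> VV \<Longrightarrow> v \<in> VV \<Longrightarrow> \<mu> (\<lambda>n. u n + v n) \<le> \<mu> u + \<mu> v"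
  unfolding PP_def is_seminorm_V_def by blast

lemma PP_homogeneous: "\<mu> \<in> PP \<Longrightarrow> u \<in> VV \<Longrightarrow> \<mu> (\<lambda>n. q * u n) = \<bar>of_rat q\<bar> * \<mu> u"
  unfolding PP_def is_seminorm_V_def by blast

lemma PP_zero: "\<mu> \<in> PP \<Longrightarrow> \<mu> (\<lambda>_. 0) = 0"
  using PP_homogeneous[OF _ VV_zero, of \<mu> 0] by simp

lemma PP_nonneg:
  assumes "\<mu> \<in> PP" "u \<in> VV"
  shows "0 \<le> \<mu> u"
proof -
  have "0 = \<mu> (\<lambda>n. u n + (-1) * u n)"
    using PP_zero[OF assms(1)] by simp
  also have "\<dots> \<le> \<mu> u + \<mu> (\<lambda>n. (-1) * u n)"
    using assms by (intro PP_triangle VV_scale)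
  also have "\<dots> = 2 * \<mu> u"
    using PP_homogeneous[OF assms, of "-1"] by simp
  finally show ?thesis by simp
qed

lemma is_seminorm_c00_triangle:
  "is_seminorm_c00 \<nu> \<Longrightarrow> x \<in> c00 \<Longrightarrow> y \<in> c00 \<Longrightarrow> \<nu> (\<lambda>n. x n + y n) \<le> \<nu> x + \<nu> y"
  unfolding is_seminorm_c00_def by blast

lemma is_seminorm_c00_homogeneous:
  "is_seminorm_c00 \<nu> \<Longrightarrow> x \<in> c00 \<Longrightarrow> \<nu> (\<lambda>n. a * x n) = \<bar>a\<bar> * \<nu> x"
  unfolding is_seminorm_c00_def by blast

lemma seminorm_le_sum_unit:
  fixes N :: "(nat \<Rightarrow> 'a::comm_ring_1) \<Rightarrow> real" and h :: "'a \<Rightarrow> real"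
  assumes triangle: "\<And>u v. finite {n. u n \<noteq> 0} \<Longrightarrow> finite {n. v n \<noteq> 0} \<Longrightarrow>
      N (\<lambda>n. u n + v n) \<le> N u + N v"
    and homogeneous: "\<And>u a. finite {n. u n \<noteq> 0} \<Longrightarrow> N (\<lambda>n. a * u n) = h a * N u"
    and "h 0 = 0" "finite S" "{n. u n \<noteq> 0} \<subseteq> S"
  shows "N u \<le> (\<Sum>n\<in>S. h (u n) * N (\<lambda>m. if m = n then 1 else 0))"
  using \<open>finite S\<close> \<open>{n. u n \<noteq> 0} \<subseteq> S\<close>
proof (induction S arbitrary: u rule: finite_induct)
  case empty
  then have "u = (\<lambda>n. 0 * u n)"
    by auto
  then have "N u = h 0 * N u"
    using empty homogeneous[of u 0] by simp
  then show ?case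
    using \<open>h 0 = 0\<close> by simp
next
  case (insert i S u)
  let ?e = "\<lambda>m. if m = i then 1 else (0::'a)"
  define u' where "u' = (\<lambda>n. if n = i then 0 else u n)"
  have fin_e: "finite {n. ?e n \<noteq> 0}" and fin_ue: "finite {n. u i * ?e n \<noteq> 0}"
    by (auto intro: rev_finite_subset[of "{i}"])
  have fin_u': "finite {n. u' n \<noteq> 0}"
    using insert.hyps(1) insert.prems unfolding u'_def by (auto intro: rev_finite_subset)
  have "N u = N (\<lambda>n. u' n + u i * ?e n)"
    unfolding u'_def by (rule arg_cong[where f = N]) auto
  also have "\<dots> \<le> N u' + h (u i) * N ?e"
    using triangle[OF fin_u' fin_ue] homogeneous[OF fin_e] by simp
  also have "N u' \<le> (\<Sum>n\<in>S. h (u' n) * N (\<lambda>m. if m = n then 1 else 0))"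
    using insert.prems unfolding u'_def by (intro insert.IH) auto
  also have "\<dots> = (\<Sum>n\<in>S. h (u n) * N (\<lambda>m. if m = n then 1 else 0))"
    using insert.hyps(2) unfolding u'_def by (intro sum.cong) auto
  finally show ?case
    using insert.hyps by (simp add: add.commute)
qed

definition weighted_l1 :: "((nat \<Rightarrow> rat) \<Rightarrow> real) \<Rightarrow> (nat \<Rightarrow> real) \<Rightarrow> real" where
  "weighted_l1 \<mu> x = (\<Sum>n | x n \<noteq> 0. \<bar>x n\<bar> * \<mu> (unit_seq n))"

lemma weighted_l1_eq_sum:
  "finite S \<Longrightarrow> {n. x n \<noteq> 0} \<subseteq> S \<Longrightarrow> weighted_l1 \<mu> x = (\<Sum>n\<in>S. \<bar>x n\<bar> * \<mu> (unit_seq n))"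
  unfolding weighted_l1_def by (rule sum.mono_neutral_left) auto

lemma weighted_l1_nonneg: "\<mu> \<in> PP \<Longrightarrow> 0 \<le> weighted_l1 \<mu> x"
  unfolding weighted_l1_def
  by (intro sum_nonneg mult_nonneg_nonneg) (simp_all add: PP_nonneg unit_seq_VV)

lemma weighted_l1_zero: "weighted_l1 \<mu> (\<lambda>_. 0) = 0"
  unfolding weighted_l1_def by simp

lemma weighted_l1_triangle:
  assumes "\<mu> \<in> PP" "x \<in> c00" "y \<in> c00"
  shows "weighted_l1 \<mu> (\<lambda>n. x n + y n) \<le> weighted_l1 \<mu> x + weighted_l1 \<mu> y"
proof -
  let ?S = "{n. x n \<noteq> 0} \<union> {n. y n \<noteq> 0}"
  have S: "finite ?S"
    using assms unfolding c00_def by simp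
  have "weighted_l1 \<mu> (\<lambda>n. x n + y n) = (\<Sum>n\<in>?S. \<bar>x n + y n\<bar> * \<mu> (unit_seq n))"
    by (rule weighted_l1_eq_sum[OF S]) auto
  also have "\<dots> \<le> (\<Sum>n\<in>?S. \<bar>x n\<bar> * \<mu> (unit_seq n) + \<bar>y n\<bar> * \<mu> (unit_seq n))"
    unfolding distrib_right[symmetric]
    by (intro sum_mono mult_right_mono abs_triangle_ineq PP_nonneg[OF assms(1) unit_seq_VV])
  also have "\<dots> = weighted_l1 \<mu> x + weighted_l1 \<mu> y"
    by (simp add: weighted_l1_eq_sum[OF S] sum.distrib)
  finally show ?thesis .
qed

lemma weighted_l1_scale:
  assumes "x \<in> c00"
  shows "weighted_l1 \<mu> (\<lambda>n. a * x n) = \<bar>a\<bar> * weighted_l1 \<mu> x"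
proof -
  have S: "finite {n. x n \<noteq> 0}"
    using assms unfolding c00_def by simp
  have "weighted_l1 \<mu> (\<lambda>n. a * x n) = (\<Sum>n | x n \<noteq> 0. \<bar>a * x n\<bar> * \<mu> (unit_seq n))"
    by (rule weighted_l1_eq_sum[OF S]) auto
  then show ?thesis
    by (simp add: weighted_l1_def sum_distrib_left abs_mult mult.assoc)
qed

lemma weighted_l1_minus_commute:
  "x \<in> c00 \<Longrightarrow> y \<in> c00 \<Longrightarrow> weighted_l1 \<mu> (\<lambda>n. x n - y n) = weighted_l1 \<mu> (\<lambda>n. y n - x n)"
  using weighted_l1_scale[OF c00_diff, of y x \<mu> "-1"] by simp

lemma PP_le_weighted_l1:
  assumes "\<mu> \<in> PP" "u \<in> VV"
  shows "\<mu> u \<le> weighted_l1 \<mu> (emb u)"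
proof -
  have "\<mu> u \<le> (\<Sum>n | u n \<noteq> 0. \<bar>of_rat (u n)\<bar> * \<mu> (\<lambda>m. if m = n then 1 else 0))"
    using assms PP_triangle PP_homogeneous
    by (intro seminorm_le_sum_unit[where h = "\<lambda>q. \<bar>of_rat q\<bar>"]) (auto simp: VV_def)
  also have "\<dots> = weighted_l1 \<mu> (emb u)"
    unfolding weighted_l1_def support_emb by (simp add: emb_def unit_seq_def)
  finally show ?thesis .
qed

section \<open>Existence and uniqueness of mu_bar\<close>

definition seminorm_extension :: "((nat \<Rightarrow> rat) \<Rightarrow> real) \<Rightarrow> ((nat \<Rightarrow> real) \<Rightarrow> real) \<Rightarrow> bool" where
  "seminorm_extension \<mu> \<nu> \<longleftrightarrow> is_seminorm_c00 \<nu> \<and> (\<forall>u\<in>VV. \<nu> (emb u) = \<mu> u)"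

lemma seminorm_extension_le_weighted_l1:
  assumes "seminorm_extension \<mu> \<nu>" "x \<in> c00"
  shows "\<nu> x \<le> weighted_l1 \<mu> x"
proof -
  have sn: "is_seminorm_c00 \<nu>" and ext: "\<forall>u\<in>VV. \<nu> (emb u) = \<mu> u"
    using assms(1) unfolding seminorm_extension_def by auto
  have "\<nu> x \<le> (\<Sum>n | x n \<noteq> 0. \<bar>x n\<bar> * \<nu> (\<lambda>m. if m = n then 1 else 0))"
  proof (rule seminorm_le_sum_unit[where h = abs])
    show "\<nu> (\<lambda>n. u n + v n) \<le> \<nu> u + \<nu> v" if "finite {n. u n \<noteq> 0}" "finite {n. v n \<noteq> 0}" for u v
      using is_seminorm_c00_triangle[OF sn] that unfolding c00_def by blast
    show "\<nu> (\<lambda>n. a * u n) = \<bar>a\<bar> * \<nu> u" if "finite {n. u n \<noteq> 0}" for u a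
      using is_seminorm_c00_homogeneous[OF sn] that unfolding c00_def by blast
    show "finite {n. x n \<noteq> 0}"
      using assms(2) unfolding c00_def by simp
  qed simp_all
  also have "\<dots> = weighted_l1 \<mu> x"
  proof -
    have "\<nu> (\<lambda>m. if m = n then 1 else 0) = \<mu> (unit_seq n)" for n
      using bspec[OF ext unit_seq_VV, of n] by (simp only: emb_unit_seq)
    then show ?thesis
      unfolding weighted_l1_def by simp
  qed
  finally show ?thesis .
qed

lemma seminorm_extension_lipschitz:
  assumes "seminorm_extension \<mu> \<nu>" "x \<in> c00" "y \<in> c00"
  shows "\<bar>\<nu> x - \<nu> y\<bar> \<le> weighted_l1 \<mu> (\<lambda>n. x n - y n)"
proof -
  have le: "\<nu> x' \<le> \<nu> y' + weighted_l1 \<mu> (\<lambda>n. x' n - y' n)" if "x' \<in> c00" "y' \<in> c00" for x' y'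
  proof -
    have "\<nu> x' = \<nu> (\<lambda>n. y' n + (x' n - y' n))"
      by simp
    also have "\<dots> \<le> \<nu> y' + \<nu> (\<lambda>n. x' n - y' n)"
      using assms(1) that c00_diff is_seminorm_c00_triangle unfolding seminorm_extension_def
      by blast
    also have "\<nu> (\<lambda>n. x' n - y' n) \<le> weighted_l1 \<mu> (\<lambda>n. x' n - y' n)"
      using assms(1) that by (intro seminorm_extension_le_weighted_l1 c00_diff)
    finally show ?thesis by simp
  qed
  show ?thesis
    using le[OF assms(2,3)] le[OF assms(3,2)] weighted_l1_minus_commute[OF assms(2,3), of \<mu>]
    unfolding abs_le_iff by linarith
qed

lemma VV_dense_weighted_l1:
  assumes "\<mu> \<in> PP" "x \<in> c00" "0 < e"
  obtains q where "q \<in> VV" "weighted_l1 \<mu> (\<lambda>n. x n - emb q n) < e"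
proof -
  define S where "S = {n. x n \<noteq> 0}"
  have S: "finite S"
    using assms(2) unfolding S_def c00_def by simp
  define C where "C = (\<Sum>n\<in>S. \<mu> (unit_seq n)) + 1"
  have "0 \<le> (\<Sum>n\<in>S. \<mu> (unit_seq n))"
    by (intro sum_nonneg PP_nonneg[OF assms(1) unit_seq_VV])
  then have C: "0 < C"
    unfolding C_def by simp
  define d where "d = e / C"
  have d: "0 < d"
    unfolding d_def using C assms(3) by simp
  have "\<forall>n. \<exists>r::rat. \<bar>x n - of_rat r\<bar> < d"
  proof
    fix n
    obtain t where "t \<in> \<rat>" "x n - d < t" "t < x n"
      using Rats_dense_in_real[of "x n - d" "x n"] d by auto
    moreover obtain r where "t = of_rat r"
      using \<open>t \<in> \<rat>\<close> Rats_cases by blast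
    ultimately show "\<exists>r::rat. \<bar>x n - of_rat r\<bar> < d"
      by (intro exI[of _ r]) auto
  qed
  then have "\<exists>r. \<forall>n. \<bar>x n - of_rat (r n)\<bar> < d"
    by (rule choice)
  then obtain r where r: "\<forall>n. \<bar>x n - of_rat (r n)\<bar> < d"
    by blast
  define q where "q = (\<lambda>n. if x n = 0 then 0 else r n)"
  have "q \<in> VV"
    unfolding VV_def mem_Collect_eq by (rule rev_finite_subset[OF S]) (auto simp: q_def S_def)
  have "weighted_l1 \<mu> (\<lambda>n. x n - emb q n) = (\<Sum>n\<in>S. \<bar>x n - emb q n\<bar> * \<mu> (unit_seq n))"
    by (rule weighted_l1_eq_sum[OF S]) (auto simp: S_def q_def emb_def)
  also have "\<dots> \<le> (\<Sum>n\<in>S. d * \<mu> (unit_seq n))"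
    using r less_imp_le by (intro sum_mono mult_right_mono PP_nonneg[OF assms(1) unit_seq_VV])
      (auto simp: S_def q_def emb_def)
  also have "\<dots> = d * (C - 1)"
    by (simp add: C_def sum_distrib_left)
  also have "\<dots> < d * C"
    using d by simp
  also have "\<dots> = e"
    using C by (simp add: d_def)
  finally show ?thesis
    using that \<open>q \<in> VV\<close> by blast
qed

lemma seminorm_extension_le:
  assumes "\<mu> \<in> PP" "seminorm_extension \<mu> \<nu>\<^sub>1" "seminorm_extension \<mu> \<nu>\<^sub>2" "x \<in> c00"
  shows "\<nu>\<^sub>1 x \<le> \<nu>\<^sub>2 x"
proof (rule field_le_epsilon)
  fix e :: real
  assume "0 < e"
  then obtain q where q: "q \<in> VV" "weighted_l1 \<mu> (\<lambda>n. x n - emb q n) < e / 2"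
    using VV_dense_weighted_l1[OF assms(1,4), of "e / 2"] by auto
  have "\<bar>\<nu>\<^sub>1 x - \<nu>\<^sub>1 (emb q)\<bar> \<le> weighted_l1 \<mu> (\<lambda>n. x n - emb q n)"
    by (rule seminorm_extension_lipschitz[OF assms(2,4) emb_c00[OF q(1)]])
  moreover have "\<bar>\<nu>\<^sub>2 x - \<nu>\<^sub>2 (emb q)\<bar> \<le> weighted_l1 \<mu> (\<lambda>n. x n - emb q n)"
    by (rule seminorm_extension_lipschitz[OF assms(3,4) emb_c00[OF q(1)]])
  moreover have "\<nu>\<^sub>1 (emb q) = \<nu>\<^sub>2 (emb q)"
    using assms(2,3) q(1) unfolding seminorm_extension_def by simp
  ultimately show "\<nu>\<^sub>1 x \<le> \<nu>\<^sub>2 x + e"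
    using q(2) unfolding abs_le_iff by linarith
qed

lemma seminorm_extension_unique:
  assumes "\<mu> \<in> PP" "seminorm_extension \<mu> \<nu>\<^sub>1" "seminorm_extension \<mu> \<nu>\<^sub>2"
  shows "\<nu>\<^sub>1 = \<nu>\<^sub>2"
proof
  fix x
  show "\<nu>\<^sub>1 x = \<nu>\<^sub>2 x"
  proof (cases "x \<in> c00")
    case True
    then show ?thesis
      using seminorm_extension_le[OF assms(1,2,3)] seminorm_extension_le[OF assms(1,3,2)]
      by (simp add: antisym)
  next
    case False
    then show ?thesis
      using assms(2,3) unfolding seminorm_extension_def is_seminorm_c00_def by simp
  qed
qed

definition inf_conv :: "((nat \<Rightarrow> rat) \<Rightarrow> real) \<Rightarrow> (nat \<Rightarrow> real) \<Rightarrow> real" where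
  "inf_conv \<mu> x =
     (if x \<in> c00 then (INF q\<in>VV. \<mu> q + weighted_l1 \<mu> (\<lambda>n. x n - emb q n)) else 0)"

lemma inf_conv_le:
  assumes "\<mu> \<in> PP" "x \<in> c00" "q \<in> VV"
  shows "inf_conv \<mu> x \<le> \<mu> q + weighted_l1 \<mu> (\<lambda>n. x n - emb q n)"
proof -
  have "bdd_below ((\<lambda>q. \<mu> q + weighted_l1 \<mu> (\<lambda>n. x n - emb q n)) ` VV)"
    using assms(1) by (auto intro!: bdd_belowI2[where m = 0] simp: PP_nonneg weighted_l1_nonneg)
  then show ?thesis
    using assms(2,3) unfolding inf_conv_def by (auto intro!: cINF_lower)
qed

lemma inf_conv_greatest:
  assumes "x \<in> c00" "\<And>q. q \<in> VV \<Longrightarrow> c \<le> \<mu> q + weighted_l1 \<mu> (\<lambda>n. x n - emb q n)"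
  shows "c \<le> inf_conv \<mu> x"
  using assms VV_zero unfolding inf_conv_def by (auto intro!: cINF_greatest)

lemma inf_conv_nonneg: "\<mu> \<in> PP \<Longrightarrow> 0 \<le> inf_conv \<mu> x"
  using inf_conv_greatest[of x 0 \<mu>]
  by (cases "x \<in> c00") (auto simp: inf_conv_def PP_nonneg weighted_l1_nonneg)

lemma inf_conv_emb:
  assumes "\<mu> \<in> PP" "u \<in> VV"
  shows "inf_conv \<mu> (emb u) = \<mu> u"
proof (rule antisym)
  show "inf_conv \<mu> (emb u) \<le> \<mu> u"
    using inf_conv_le[OF assms(1) emb_c00 assms(2), OF assms(2)] by (simp add: weighted_l1_zero)
  show "\<mu> u \<le> inf_conv \<mu> (emb u)"
  proof (rule inf_conv_greatest[OF emb_c00[OF assms(2)]])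
    fix q
    assume q: "q \<in> VV"
    let ?d = "\<lambda>n. u n - q n"
    have d: "?d \<in> VV"
      using VV_lincomb[OF assms(2) q, of 1 "-1"] by simp
    have "\<mu> u = \<mu> (\<lambda>n. q n + ?d n)"
      by simp
    also have "\<dots> \<le> \<mu> q + \<mu> ?d"
      by (rule PP_triangle[OF assms(1) q d])
    also have "\<mu> ?d \<le> weighted_l1 \<mu> (emb ?d)"
      by (rule PP_le_weighted_l1[OF assms(1) d])
    finally show "\<mu> u \<le> \<mu> q + weighted_l1 \<mu> (\<lambda>n. emb u n - emb q n)"
      by (simp add: emb_def of_rat_diff)
  qed
qed

lemma inf_conv_lipschitz:
  assumes "\<mu> \<in> PP" "x \<in> c00" "y \<in> c00"
  shows "inf_conv \<mu> x \<le> inf_conv \<mu> y + weighted_l1 \<mu> (\<lambda>n. x n - y n)"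
proof -
  have "inf_conv \<mu> x - weighted_l1 \<mu> (\<lambda>n. x n - y n) \<le> inf_conv \<mu> y"
  proof (rule inf_conv_greatest[OF assms(3)])
    fix q
    assume q: "q \<in> VV"
    have "inf_conv \<mu> x \<le> \<mu> q + weighted_l1 \<mu> (\<lambda>n. (x n - y n) + (y n - emb q n))"
      using inf_conv_le[OF assms(1,2) q] by simp
    also have "\<dots> \<le> \<mu> q + (weighted_l1 \<mu> (\<lambda>n. x n - y n) + weighted_l1 \<mu> (\<lambda>n. y n - emb q n))"
      using assms q by (intro add_left_mono weighted_l1_triangle c00_diff emb_c00)
    finally show "inf_conv \<mu> x - weighted_l1 \<mu> (\<lambda>n. x n - y n)
        \<le> \<mu> q + weighted_l1 \<mu> (\<lambda>n. y n - emb q n)"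
      by simp
  qed
  then show ?thesis by simp
qed

lemma inf_conv_triangle:
  assumes "\<mu> \<in> PP" "x \<in> c00" "y \<in> c00"
  shows "inf_conv \<mu> (\<lambda>n. x n + y n) \<le> inf_conv \<mu> x + inf_conv \<mu> y"
proof -
  have xy: "(\<lambda>n. x n + y n) \<in> c00"
    using c00_lincomb[OF assms(2,3), of 1 1] by simp
  have "inf_conv \<mu> (\<lambda>n. x n + y n) - inf_conv \<mu> x \<le> inf_conv \<mu> y"
  proof (rule inf_conv_greatest[OF assms(3)])
    fix r
    assume r: "r \<in> VV"
    have "inf_conv \<mu> (\<lambda>n. x n + y n) - (\<mu> r + weighted_l1 \<mu> (\<lambda>n. y n - emb r n)) \<le> inf_conv \<mu> x"
    proof (rule inf_conv_greatest[OF assms(2)])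
      fix q
      assume q: "q \<in> VV"
      have qr: "(\<lambda>n. q n + r n) \<in> VV"
        using VV_lincomb[OF q r, of 1 1] by simp
      have "inf_conv \<mu> (\<lambda>n. x n + y n)
          \<le> \<mu> (\<lambda>n. q n + r n) + weighted_l1 \<mu> (\<lambda>n. (x n - emb q n) + (y n - emb r n))"
        using inf_conv_le[OF assms(1) xy qr] by (simp add: emb_def of_rat_add algebra_simps)
      also have "\<dots> \<le> (\<mu> q + \<mu> r)
          + (weighted_l1 \<mu> (\<lambda>n. x n - emb q n) + weighted_l1 \<mu> (\<lambda>n. y n - emb r n))"
        using assms q r
        by (intro add_mono PP_triangle weighted_l1_triangle c00_diff emb_c00)
      finally show "inf_conv \<mu> (\<lambda>n. x n + y n) - (\<mu> r + weighted_l1 \<mu> (\<lambda>n. y n - emb r n))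
          \<le> \<mu> q + weighted_l1 \<mu> (\<lambda>n. x n - emb q n)"
        by simp
    qed
    then show "inf_conv \<mu> (\<lambda>n. x n + y n) - inf_conv \<mu> x
        \<le> \<mu> r + weighted_l1 \<mu> (\<lambda>n. y n - emb r n)"
      by simp
  qed
  then show ?thesis by simp
qed

lemma inf_conv_scale_rat_le:
  fixes s :: rat
  assumes "\<mu> \<in> PP" "x \<in> c00"
  shows "inf_conv \<mu> (\<lambda>n. of_rat s * x n) \<le> \<bar>of_rat s\<bar> * inf_conv \<mu> x"
proof (cases "s = 0")
  case True
  then show ?thesis
    using inf_conv_le[OF assms(1) c00_zero VV_zero]
    by (simp add: PP_zero[OF assms(1)] emb_def weighted_l1_zero)
next
  case False
  then have s: "0 < \<bar>of_rat s :: real\<bar>"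
    by simp
  have "inf_conv \<mu> (\<lambda>n. of_rat s * x n) / \<bar>of_rat s\<bar> \<le> inf_conv \<mu> x"
  proof (rule inf_conv_greatest[OF assms(2)])
    fix q
    assume q: "q \<in> VV"
    have "(\<lambda>n. of_rat s * x n - emb (\<lambda>n. s * q n) n) = (\<lambda>n. of_rat s * (x n - emb q n))"
      by (simp add: emb_def of_rat_mult right_diff_distrib)
    then have "inf_conv \<mu> (\<lambda>n. of_rat s * x n)
        \<le> \<mu> (\<lambda>n. s * q n) + weighted_l1 \<mu> (\<lambda>n. of_rat s * (x n - emb q n))"
      using inf_conv_le[OF assms(1) c00_scale[OF assms(2), of "of_rat s"] VV_scale[OF q, of s]] by simp
    also have "\<dots> = \<bar>of_rat s\<bar> * (\<mu> q + weighted_l1 \<mu> (\<lambda>n. x n - emb q n))"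
      using assms q
      by (simp add: PP_homogeneous weighted_l1_scale c00_diff emb_c00 distrib_left)
    finally show "inf_conv \<mu> (\<lambda>n. of_rat s * x n) / \<bar>of_rat s\<bar>
        \<le> \<mu> q + weighted_l1 \<mu> (\<lambda>n. x n - emb q n)"
      using s by (simp add: divide_le_eq mult.commute)
  qed
  then show ?thesis
    using s by (simp add: divide_le_eq mult.commute)
qed

(* Real homogeneity is inherited from rational homogeneity because inf_conv \<mu> is
   Lipschitz for weighted_l1 \<mu>. *)
lemma inf_conv_scale_le:
  assumes "\<mu> \<in> PP" "x \<in> c00"
  shows "inf_conv \<mu> (\<lambda>n. a * x n) \<le> \<bar>a\<bar> * inf_conv \<mu> x"
proof (rule field_le_epsilon)
  fix e :: real
  assume e: "0 < e"
  define M where "M = inf_conv \<mu> x + weighted_l1 \<mu> x + 1"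
  have M: "0 < M"
    unfolding M_def using inf_conv_nonneg[OF assms(1), of x] weighted_l1_nonneg[OF assms(1), of x]
    by linarith
  obtain r where r: "r \<in> \<rat>" "a - e / M < r" "r < a"
    using Rats_dense_in_real[of "a - e / M" a] e M by auto
  obtain s where s: "r = of_rat s"
    using r(1) Rats_cases by blast
  have "inf_conv \<mu> (\<lambda>n. a * x n)
      \<le> inf_conv \<mu> (\<lambda>n. r * x n) + weighted_l1 \<mu> (\<lambda>n. (a - r) * x n)"
    using inf_conv_lipschitz[OF assms(1) c00_scale[OF assms(2), of a] c00_scale[OF assms(2), of r]]
    by (simp add: algebra_simps)
  also have "\<dots> \<le> \<bar>r\<bar> * inf_conv \<mu> x + \<bar>a - r\<bar> * weighted_l1 \<mu> x"
    using inf_conv_scale_rat_le[OF assms, of s] s by (simp add: weighted_l1_scale[OF assms(2)])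
  also have "\<dots> \<le> (\<bar>a\<bar> + \<bar>a - r\<bar>) * inf_conv \<mu> x + \<bar>a - r\<bar> * weighted_l1 \<mu> x"
    using inf_conv_nonneg[OF assms(1), of x] by (intro add_right_mono mult_right_mono) auto
  also have "\<dots> = \<bar>a\<bar> * inf_conv \<mu> x + \<bar>a - r\<bar> * (inf_conv \<mu> x + weighted_l1 \<mu> x)"
    by (simp add: algebra_simps)
  also have "\<dots> \<le> \<bar>a\<bar> * inf_conv \<mu> x + (e / M) * M"
    using r M inf_conv_nonneg[OF assms(1)] weighted_l1_nonneg[OF assms(1)] unfolding M_def
    by (intro add_left_mono mult_mono) auto
  finally show "inf_conv \<mu> (\<lambda>n. a * x n) \<le> \<bar>a\<bar> * inf_conv \<mu> x + e"
    using M by simp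
qed

lemma inf_conv_scale:
  assumes "\<mu> \<in> PP" "x \<in> c00"
  shows "inf_conv \<mu> (\<lambda>n. a * x n) = \<bar>a\<bar> * inf_conv \<mu> x"
proof (cases "a = 0")
  case True
  then show ?thesis
    using inf_conv_scale_le[OF assms, of 0] inf_conv_nonneg[OF assms(1)] by (simp add: antisym)
next
  case False
  have "inf_conv \<mu> x = inf_conv \<mu> (\<lambda>n. inverse a * (a * x n))"
    using False by (simp add: field_simps)
  also have "\<dots> \<le> \<bar>inverse a\<bar> * inf_conv \<mu> (\<lambda>n. a * x n)"
    by (rule inf_conv_scale_le[OF assms(1) c00_scale[OF assms(2)]])
  finally have "\<bar>a\<bar> * inf_conv \<mu> x \<le> inf_conv \<mu> (\<lambda>n. a * x n)"
    using False by (simp add: field_simps abs_inverse)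
  then show ?thesis
    using inf_conv_scale_le[OF assms, of a] by simp
qed

lemma seminorm_extension_inf_conv: "\<mu> \<in> PP \<Longrightarrow> seminorm_extension \<mu> (inf_conv \<mu>)"
  unfolding seminorm_extension_def is_seminorm_c00_def
  by (auto simp: inf_conv_triangle inf_conv_scale inf_conv_emb) (simp add: inf_conv_def)

lemma seminorm_extension_mu_bar:
  assumes "\<mu> \<in> PP"
  shows "seminorm_extension \<mu> (mu_bar \<mu>)"
proof -
  have "mu_bar \<mu> = (THE \<nu>. seminorm_extension \<mu> \<nu>)"
    unfolding mu_bar_def seminorm_extension_def ..
  also have "\<dots> = inf_conv \<mu>"
    by (rule the_equality)
      (use assms seminorm_extension_inf_conv seminorm_extension_unique in blast)+
  finally show ?thesis
    using seminorm_extension_inf_conv[OF assms] by simp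
qed

section \<open>Description of K_\<mu>\<close>

definition rat_linear :: "((nat \<Rightarrow> rat) \<Rightarrow> real) \<Rightarrow> bool" where
  "rat_linear \<phi> \<longleftrightarrow> (\<forall>u\<in>VV. \<forall>v\<in>VV. \<forall>a b.
     \<phi> (\<lambda>n. a * u n + b * v n) = of_rat a * \<phi> u + of_rat b * \<phi> v)"

lemma rat_linear_eq_sum_unit:
  assumes "rat_linear \<phi>" "finite S" "u \<in> VV" "{n. u n \<noteq> 0} \<subseteq> S"
  shows "\<phi> u = (\<Sum>n\<in>S. of_rat (u n) * \<phi> (unit_seq n))"
  using assms(2-4)
proof (induction S arbitrary: u rule: finite_induct)
  case empty
  have "\<phi> (\<lambda>n. 0 * u n + 0 * u n) = of_rat 0 * \<phi> u + of_rat 0 * \<phi> u"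
    using assms(1) empty.prems(1) unfolding rat_linear_def by blast
  moreover have "u = (\<lambda>_. 0)"
    using empty.prems(2) by auto
  ultimately show ?case
    by simp
next
  case (insert i S u)
  define u' where "u' = (\<lambda>n. if n = i then 0 else u n)"
  have "{n. u' n \<noteq> 0} \<subseteq> {n. u n \<noteq> 0}"
    unfolding u'_def by auto
  then have u': "u' \<in> VV"
    using insert.prems(1) unfolding VV_def by (auto intro: finite_subset)
  have "\<phi> u = \<phi> (\<lambda>n. 1 * u' n + u i * unit_seq i n)"
    by (rule arg_cong[where f = \<phi>]) (auto simp: u'_def unit_seq_def)
  also have "\<dots> = of_rat 1 * \<phi> u' + of_rat (u i) * \<phi> (unit_seq i)"
    using assms(1) u' unit_seq_VV unfolding rat_linear_def by blast
  also have "\<phi> u' = (\<Sum>n\<in>S. of_rat (u' n) * \<phi> (unit_seq n))"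
    using insert.prems(2) by (intro insert.IH u') (auto simp: u'_def)
  also have "\<dots> = (\<Sum>n\<in>S. of_rat (u n) * \<phi> (unit_seq n))"
    using insert.hyps(2) unfolding u'_def by (intro sum.cong) auto
  finally show ?case
    using insert.hyps by (simp add: add.commute)
qed

definition linear_ext :: "((nat \<Rightarrow> rat) \<Rightarrow> real) \<Rightarrow> (nat \<Rightarrow> real) \<Rightarrow> real" where
  "linear_ext \<phi> x = (\<Sum>n | x n \<noteq> 0. x n * \<phi> (unit_seq n))"

lemma linear_ext_eq_sum:
  "finite S \<Longrightarrow> {n. x n \<noteq> 0} \<subseteq> S \<Longrightarrow> linear_ext \<phi> x = (\<Sum>n\<in>S. x n * \<phi> (unit_seq n))"
  unfolding linear_ext_def by (rule sum.mono_neutral_left) auto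

lemma linear_ext_lincomb:
  assumes "x \<in> c00" "y \<in> c00"
  shows "linear_ext \<phi> (\<lambda>n. a * x n + b * y n) = a * linear_ext \<phi> x + b * linear_ext \<phi> y"
proof -
  let ?S = "{n. x n \<noteq> 0} \<union> {n. y n \<noteq> 0}"
  have S: "finite ?S"
    using assms unfolding c00_def by simp
  have "linear_ext \<phi> (\<lambda>n. a * x n + b * y n)
      = (\<Sum>n\<in>?S. (a * x n + b * y n) * \<phi> (unit_seq n))"
    by (rule linear_ext_eq_sum[OF S]) auto
  also have "\<dots> = a * (\<Sum>n\<in>?S. x n * \<phi> (unit_seq n)) + b * (\<Sum>n\<in>?S. y n * \<phi> (unit_seq n))"
    by (simp add: sum.distrib sum_distrib_left distrib_right mult.assoc)
  also have "\<dots> = a * linear_ext \<phi> x + b * linear_ext \<phi> y"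
    using linear_ext_eq_sum[OF S, of x \<phi>] linear_ext_eq_sum[OF S, of y \<phi>] by simp
  finally show ?thesis .
qed

lemma linear_ext_emb:
  assumes "rat_linear \<phi>" "u \<in> VV"
  shows "linear_ext \<phi> (emb u) = \<phi> u"
  using rat_linear_eq_sum_unit[OF assms(1) _ assms(2) order_refl] assms(2)
  unfolding linear_ext_def support_emb VV_def by (simp add: emb_def)

lemma abs_linear_ext_le_weighted_l1:
  assumes "\<And>n. \<bar>\<phi> (unit_seq n)\<bar> \<le> \<mu> (unit_seq n)"
  shows "\<bar>linear_ext \<phi> x\<bar> \<le> weighted_l1 \<mu> x"
  unfolding linear_ext_def weighted_l1_def
  by (rule order_trans[OF sum_abs], rule sum_mono) (simp add: abs_mult assms mult_left_mono)

lemma abs_linear_ext_le_mu_bar: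
  assumes "\<mu> \<in> PP" "rat_linear \<phi>" "\<And>u. u \<in> VV \<Longrightarrow> \<bar>\<phi> u\<bar> \<le> \<mu> u" "x \<in> c00"
  shows "\<bar>linear_ext \<phi> x\<bar> \<le> mu_bar \<mu> x"
proof (rule field_le_epsilon)
  fix e :: real
  assume "0 < e"
  then obtain q where q: "q \<in> VV" "weighted_l1 \<mu> (\<lambda>n. x n - emb q n) < e / 2"
    using VV_dense_weighted_l1[OF assms(1,4), of "e / 2"] by auto
  have "linear_ext \<phi> (\<lambda>n. 1 * emb q n + 1 * (x n - emb q n))
      = 1 * linear_ext \<phi> (emb q) + 1 * linear_ext \<phi> (\<lambda>n. x n - emb q n)"
    using assms(4) q(1) by (intro linear_ext_lincomb emb_c00 c00_diff)
  then have "linear_ext \<phi> x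
      = linear_ext \<phi> (emb q) + linear_ext \<phi> (\<lambda>n. x n - emb q n)"
    by simp
  then have "\<bar>linear_ext \<phi> x\<bar>
      \<le> \<bar>linear_ext \<phi> (emb q)\<bar> + \<bar>linear_ext \<phi> (\<lambda>n. x n - emb q n)\<bar>"
    by (simp add: abs_triangle_ineq)
  also have "\<bar>linear_ext \<phi> (emb q)\<bar> \<le> mu_bar \<mu> (emb q)"
    using assms(3) q(1) seminorm_extension_mu_bar[OF assms(1)]
    by (simp add: linear_ext_emb[OF assms(2)] seminorm_extension_def)
  also have "\<dots> \<le> mu_bar \<mu> x + weighted_l1 \<mu> (\<lambda>n. x n - emb q n)"
    using seminorm_extension_lipschitz[OF seminorm_extension_mu_bar assms(4) emb_c00, OF assms(1) q(1)]
    by (simp add: abs_le_iff)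
  also have "\<bar>linear_ext \<phi> (\<lambda>n. x n - emb q n)\<bar> \<le> weighted_l1 \<mu> (\<lambda>n. x n - emb q n)"
    by (intro abs_linear_ext_le_weighted_l1 assms(3) unit_seq_VV)
  finally show "\<bar>linear_ext \<phi> x\<bar> \<le> mu_bar \<mu> x + e"
    using q(2) by simp
qed

lemma BB_PP: "\<mu> \<in> BB \<Longrightarrow> \<mu> \<in> PP"
  unfolding BB_def by simp

lemma BB_pos:
  assumes "\<mu> \<in> BB" "u \<in> VV" "u \<noteq> (\<lambda>_. 0)"
  shows "0 < \<mu> u"
proof -
  have P: "\<mu> \<in> PP"
    using assms(1) by (rule BB_PP)
  have "mu_bar \<mu> (emb u) = \<mu> u"
    using seminorm_extension_mu_bar[OF P] assms(2) unfolding seminorm_extension_def by simp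
  moreover have "mu_bar \<mu> (emb u) \<noteq> 0"
  proof
    assume "mu_bar \<mu> (emb u) = 0"
    then have "emb u = (\<lambda>_. 0)"
      using assms(1) emb_c00[OF assms(2)] unfolding BB_def by simp
    with assms(3) show False
      by (simp add: emb_eq_zero_iff)
  qed
  ultimately show ?thesis
    using PP_nonneg[OF P assms(2)] by simp
qed

lemma topspace_cube_top: "topspace cube_top = (\<Pi>\<^sub>E u\<in>VV. {-1..1})"
  unfolding cube_top_def by simp

(* The clause g 0 = 0 is needed separately: \<mu> 0 = 0, so the product g u * \<mu> u carries no
   information at u = 0, whereas T_op sets that coordinate to 0. *)
definition scaled_linear :: "((nat \<Rightarrow> rat) \<Rightarrow> real) \<Rightarrow> ((nat \<Rightarrow> rat) \<Rightarrow> real) \<Rightarrow> bool" where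
  "scaled_linear \<mu> g \<longleftrightarrow> g (\<lambda>_. 0) = 0 \<and> rat_linear (\<lambda>u. g u * \<mu> u)"

lemma scaled_linear_T_op:
  assumes "\<mu> \<in> BB" "f \<in> dual_ball \<mu>"
  shows "scaled_linear \<mu> (T_op \<mu> f)"
proof -
  have f_lin: "f (\<lambda>n. a * x n + b * y n) = a * f x + b * f y" if "x \<in> c00" "y \<in> c00" for x y a b
    using assms(2) that unfolding dual_ball_def by blast
  have T_op_mult: "T_op \<mu> f u * \<mu> u = f (emb u)" if u: "u \<in> VV" for u
  proof (cases "u = (\<lambda>_. 0)")
    case True
    have "f (\<lambda>n. 0 * 0 + 0 * 0) = 0 * f (\<lambda>_. 0) + 0 * f (\<lambda>_. 0)"
      by (rule f_lin[OF c00_zero c00_zero])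
    then show ?thesis
      using True PP_zero[OF BB_PP[OF assms(1)]] by (simp add: emb_def)
  next
    case False
    then show ?thesis
      using u BB_pos[OF assms(1) u False] by (simp add: T_op_def)
  qed
  show ?thesis
    unfolding scaled_linear_def rat_linear_def
  proof (intro conjI ballI allI)
    show "T_op \<mu> f (\<lambda>_. 0) = 0"
      by (simp add: T_op_def VV_zero)
    fix u v a b
    assume u: "u \<in> VV" and v: "v \<in> VV"
    have "f (emb (\<lambda>n. a * u n + b * v n)) = of_rat a * f (emb u) + of_rat b * f (emb v)"
      unfolding emb_lincomb by (rule f_lin[OF emb_c00[OF u] emb_c00[OF v]])
    then show "T_op \<mu> f (\<lambda>n. a * u n + b * v n) * \<mu> (\<lambda>n. a * u n + b * v n)
        = of_rat a * (T_op \<mu> f u * \<mu> u) + of_rat b * (T_op \<mu> f v * \<mu> v)"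
      by (simp only: T_op_mult u v VV_lincomb)
  qed
qed

lemma T_op_linear_ext:
  assumes "\<mu> \<in> BB" "g \<in> topspace cube_top" "scaled_linear \<mu> g"
  shows "T_op \<mu> (linear_ext (\<lambda>u. g u * \<mu> u)) = g"
proof
  fix u
  show "T_op \<mu> (linear_ext (\<lambda>u. g u * \<mu> u)) u = g u"
  proof (cases "u \<in> VV")
    case True
    have lin: "rat_linear (\<lambda>u. g u * \<mu> u)" and g0: "g (\<lambda>_. 0) = 0"
      using assms(3) unfolding scaled_linear_def by auto
    show ?thesis
    proof (cases "u = (\<lambda>_. 0)")
      case False
      have "0 < \<mu> u"
        by (rule BB_pos[OF assms(1) True False])
      moreover have "linear_ext (\<lambda>u. g u * \<mu> u) (emb u) = g u * \<mu> u"
        by (rule linear_ext_emb[OF lin True])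
      ultimately show ?thesis
        using True False by (simp add: T_op_def)
    qed (simp add: T_op_def VV_zero g0)
  next
    case False
    have "g u = undefined"
      using assms(2) False unfolding topspace_cube_top by (rule PiE_arb)
    then show ?thesis
      using False by (simp add: T_op_def)
  qed
qed

lemma linear_ext_dual_ball:
  assumes "\<mu> \<in> PP" "g \<in> topspace cube_top" "scaled_linear \<mu> g"
  shows "linear_ext (\<lambda>u. g u * \<mu> u) \<in> dual_ball \<mu>"
proof -
  have bound: "\<bar>g u * \<mu> u\<bar> \<le> \<mu> u" if "u \<in> VV" for u
  proof -
    have "g u \<in> {-1..1}"
      using assms(2) that unfolding topspace_cube_top by (rule PiE_mem)
    then have "\<bar>g u\<bar> \<le> 1"
      by auto
    moreover have "0 \<le> \<mu> u"
      by (rule PP_nonneg[OF assms(1) that])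
    ultimately show ?thesis
      by (simp add: abs_mult mult_left_le_one_le)
  qed
  have lin: "rat_linear (\<lambda>u. g u * \<mu> u)"
    using assms(3) unfolding scaled_linear_def by simp
  show ?thesis
    unfolding dual_ball_def mem_Collect_eq
  proof (intro conjI ballI allI)
    fix x y a b
    assume "x \<in> c00" "y \<in> c00"
    then show "linear_ext (\<lambda>u. g u * \<mu> u) (\<lambda>n. a * x n + b * y n)
        = a * linear_ext (\<lambda>u. g u * \<mu> u) x + b * linear_ext (\<lambda>u. g u * \<mu> u) y"
      by (rule linear_ext_lincomb)
  next
    fix x
    assume "x \<in> c00"
    then show "\<bar>linear_ext (\<lambda>u. g u * \<mu> u) x\<bar> \<le> mu_bar \<mu> x"
      using abs_linear_ext_le_mu_bar[OF assms(1) lin bound] by simp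
  qed
qed

lemma K_mu_iff:
  assumes "\<mu> \<in> BB" "g \<in> topspace cube_top"
  shows "g \<in> K_mu \<mu> \<longleftrightarrow> scaled_linear \<mu> g"
proof
  assume "g \<in> K_mu \<mu>"
  then obtain f where "f \<in> dual_ball \<mu>" "g = T_op \<mu> f"
    unfolding K_mu_def by blast
  then show "scaled_linear \<mu> g"
    using scaled_linear_T_op[OF assms(1)] by simp
next
  assume lin: "scaled_linear \<mu> g"
  show "g \<in> K_mu \<mu>"
    unfolding K_mu_def
  proof (rule image_eqI)
    show "g = T_op \<mu> (linear_ext (\<lambda>u. g u * \<mu> u))"
      using T_op_linear_ext[OF assms lin] by simp
    show "linear_ext (\<lambda>u. g u * \<mu> u) \<in> dual_ball \<mu>"
      by (rule linear_ext_dual_ball[OF BB_PP[OF assms(1)] assms(2) lin])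
  qed
qed

section \<open>Closedness of K\<close>

lemma continuous_map_eval_fst:
  assumes "w \<in> VV"
  shows "continuous_map (prod_topology (subtopology RV_top S) Y) euclideanreal (\<lambda>p. fst p w)"
proof -
  have "continuous_map (subtopology RV_top S) euclideanreal (\<lambda>x. x w)"
    unfolding RV_top_def
    by (rule continuous_map_from_subtopology[OF continuous_map_product_projection[OF assms]])
  then show ?thesis
    using continuous_map_compose[OF continuous_map_fst] by (simp add: o_def)
qed

lemma continuous_map_eval_snd:
  assumes "w \<in> VV"
  shows "continuous_map (prod_topology X cube_top) euclideanreal (\<lambda>p. snd p w)"
proof -
  have "continuous_map cube_top euclideanreal (\<lambda>x. x w)"
    unfolding cube_top_def
    by (rule continuous_map_into_fulltopology[OF continuous_map_product_projection[OF assms]])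
  then show ?thesis
    using continuous_map_compose[OF continuous_map_snd] by (simp add: o_def)
qed

lemma closedin_scaled_linear:
  "closedin (prod_topology (subtopology RV_top BB) cube_top)
     {p \<in> BB \<times> topspace cube_top. scaled_linear (fst p) (snd p)}"
  (is "closedin ?X ?K")
proof -
  define E where "E u v a b = {p \<in> topspace ?X.
      snd p (\<lambda>n. a * u n + b * v n) * fst p (\<lambda>n. a * u n + b * v n)
      = of_rat a * (snd p u * fst p u) + of_rat b * (snd p v * fst p v)}" for u v a b
  have "topspace ?X = BB \<times> topspace cube_top"
    unfolding BB_def PP_def by auto
  then have "?K = {p \<in> topspace ?X. snd p (\<lambda>_. 0) = 0} \<inter> (\<Inter>u\<in>VV. \<Inter>v\<in>VV. \<Inter>a. \<Inter>b. E u v a b)"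
    unfolding scaled_linear_def rat_linear_def E_def by auto
  moreover have "closedin ?X {p \<in> topspace ?X. snd p (\<lambda>_. 0) = 0}"
    by (rule closedin_continuous_maps_eq[OF Hausdorff_space_euclidean
          continuous_map_eval_snd[OF VV_zero]]) simp
  moreover have closed_E: "closedin ?X (E u v a b)" if "u \<in> VV" "v \<in> VV" for u v a b
    unfolding E_def using that VV_lincomb[OF that]
    by (intro closedin_continuous_maps_eq[OF Hausdorff_space_euclidean] continuous_map_add
        continuous_map_real_mult continuous_map_eval_fst continuous_map_eval_snd
        continuous_map_const[THEN iffD2]) auto
  then have "closedin ?X (\<Inter>u\<in>VV. \<Inter>v\<in>VV. \<Inter>a. \<Inter>b. E u v a b)"
    by (intro closedin_INT closed_E) (use VV_zero in auto)
  ultimately show ?thesis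
    by (simp add: closedin_Int)
qed

theorem lemma4p1:
  shows "closedin (prod_topology (subtopology RV_top BB) cube_top) KK"
proof -
  have "KK = {p \<in> BB \<times> topspace cube_top. scaled_linear (fst p) (snd p)}"
    unfolding KK_def by (auto simp: K_mu_iff)
  then show ?thesis
    using closedin_scaled_linear by simp
qed

end
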